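(* Let $e\ge2$, let $\lambda$ be an $e$-regular partition with outer corners $c_1<\dots<c_r$ and inner corners $i_1<\dots<i_{r+1}$, and let $\omega^{(0)},\dots,\omega^{(r)}$ and $h_1,\dots,h_r$ be as in the outer flattening construction. Then for each $k\in\{1,\dots,r\}$: $h_k\in[i_k-1,i_k)$; the functions $\omega^{(k-1)}$ and $\omega^{(k)}$ coincide outside $(i_k-1,c_k)$; and $0\le\omega^{(k)}(s)-\omega^{(k-1)}(s)\le e$ for all $s\in(i_k-1,c_k)$.
   Context: A partition $\lambda=(\lambda_1\ge\dots\ge\lambda_h>0)$ is $e$-regular if $\lambda_i>\lambda_{i+e-1}$ for all $i\le h-e+1$. $Y(\lambda)=\{(a,b):1\le a\le h,1\le b\le\lambda_a\}$; node $(a,b)$ corresponds to the closed square with vertices $(a-b,a+b),(a-b\pm1,a+b-1),(a-b,a+b-2)$, and $\omega_\lambda(x)=\max(|x|,\sup\{y:(x,y)\text{ lies in one of these squares}\})$; $\omega_\lambda$ is piecewise linear with slope $\pm1$ on each $(k,k+1)$, $k\in\mathbb Z$. An integer $c$ is an outer (resp. inner) corner if $\omega_\lambda'=1$ on $(c-1,c)$ and $-1$ on $(c,c+1)$ (resp. $-1$ then $1$). Let $\alpha_e=1-2e^{-1}$. Outer flattening: $\omega^{(0)}=\omega_\lambda$; for $k=1,\dots,r$, let $h_k<c_k$ be the abscissa of the first point where the line of slope $\alpha_e$ through $(c_k,\omega_\lambda(c_k))$, followed from $c_k$ in the negative direction, meets the graph of $\omega^{(k-1)}$; define $\omega^{(k)}=\omega^{(k-1)}$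 on $(-\infty,h_k]\cup[c_k,\infty)$ and $\omega^{(k)}(s)=\omega_\lambda(c_k)+\alpha_e(s-c_k)$ for $s\in[h_k,c_k]$. *)

theory Defs
  imports Complex_Main
begin

text \<open>A partition is a finite non-increasing list of positive integers
  (lam ! (a-1) is the part lambda_a, length lam = h).\<close>
definition is_partition :: "nat list \<Rightarrow> bool" where
  "is_partition lam \<longleftrightarrow> sorted_wrt (\<ge>) lam \<and> (\<forall>x\<in>set lam. 0 < x)"

definition e_regular :: "nat \<Rightarrow> nat list \<Rightarrow> bool" where
  "e_regular e lam \<longleftrightarrow>
     (\<forall>i::nat. 1 \<le> i \<and> i + e - 1 \<le> length lam \<longrightarrow> lam ! (i - 1) > lam ! (i + e - 2))"

definition young :: "nat list \<Rightarrow> (nat \<times> nat) set" where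
  "young lam = {(a, b). 1 \<le> a \<and> a \<le> length lam \<and> 1 \<le> b \<and> b \<le> lam ! (a - 1)}"

definition node_square :: "nat \<times> nat \<Rightarrow> (real \<times> real) set" where
  "node_square n = (case n of (a, b) \<Rightarrow>
     {(x, y). \<bar>x - (real a - real b)\<bar> + \<bar>y - (real a + real b - 1)\<bar> \<le> 1})"

text \<open>omega_lambda(x) = max(|x|, sup{y : (x,y) in one of the squares}),
  where the sup of the empty set is ignored.\<close>
definition omega :: "nat list \<Rightarrow> real \<Rightarrow> real" where
  "omega lam x = Sup ({\<bar>x\<bar>} \<union> {y. \<exists>n\<in>young lam. (x, y) \<in> node_square n})"

definition outer_corner :: "(real \<Rightarrow> real) \<Rightarrow> int \<Rightarrow> bool" where
  "outer_corner w c \<longleftrightarrow>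
     (\<forall>x\<in>{real_of_int c - 1<..<real_of_int c}. (w has_real_derivative 1) (at x)) \<and>
     (\<forall>x\<in>{real_of_int c<..<real_of_int c + 1}. (w has_real_derivative -1) (at x))"

definition inner_corner :: "(real \<Rightarrow> real) \<Rightarrow> int \<Rightarrow> bool" where
  "inner_corner w c \<longleftrightarrow>
     (\<forall>x\<in>{real_of_int c - 1<..<real_of_int c}. (w has_real_derivative -1) (at x)) \<and>
     (\<forall>x\<in>{real_of_int c<..<real_of_int c + 1}. (w has_real_derivative 1) (at x))"

definition alpha :: "nat \<Rightarrow> real" where
  "alpha e = 1 - 2 / real e"

text \<open>Parameters: slope a, outer corners c (indexed from 1),
  base profile w = omega_lambda.  oflat a c w k = omega^(k).\<close>
fun oflat :: "real \<Rightarrow> (nat \<Rightarrow> int) \<Rightarrow> (real \<Rightarrow> real) \<Rightarrow> nat \<Rightarrow> real \<Rightarrow> real" where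
  "oflat a c w 0 = w"
| "oflat a c w (Suc k) =
     (let ck = real_of_int (c (Suc k));
          hk = (GREATEST s. s < ck \<and> oflat a c w k s = w ck + a * (s - ck))
      in (\<lambda>s. if hk \<le> s \<and> s \<le> ck then w ck + a * (s - ck) else oflat a c w k s))"

definition hpt :: "real \<Rightarrow> (nat \<Rightarrow> int) \<Rightarrow> (real \<Rightarrow> real) \<Rightarrow> nat \<Rightarrow> real" where
  "hpt a c w k = (let ck = real_of_int (c k) in
     (GREATEST s. s < ck \<and> oflat a c w (k - 1) s = w ck + a * (s - ck)))"

end

theory Submission
  imports Defs
begin

text \<open>On every interval [n, n + 1] the profile omega_lambda is linear with slope 1 or -1; its
  value at the integer n is the largest a + b over the nodes (a, b) on the diagonal a - b = n,
  where the points of the two axes count as nodes. Corners are sign changes of these slopes, so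
  the corners interlace as c_(k-1) < i_k < c_k and the profile rises with slope 1 from i_k to
  c_k. This ascent is shorter than e: along it the top nodes walk down one column through
  consecutive rows, and e such rows of equal length contradict e-regularity. Since the earlier
  flattenings only change the profile to the left of c_(k-1), omega^(k-1) is a V with vertex
  i_k on [i_k - 1, c_k]. The line of slope alpha_e through its right end meets the left arm at
  i_k - (c_k - i_k)/(e - 1), which lies in [i_k - 1, i_k), and the gap between the line and the
  V is at most 2(c_k - i_k)/e < e.\<close>

section \<open>The profile of a partition\<close>

text \<open>The nodes of Y(lam) together with the lattice points on the two axes; the axes
  account for the term |x| in omega.\<close>

definition ext_node :: "nat list \<Rightarrow> nat \<Rightarrow> nat \<Rightarrow> bool" where
  "ext_node lam a b \<longleftrightarrow> a = 0 \<or> b = 0 \<or> (a \<le> length lam \<and> b \<le> lam ! (a - 1))"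

definition diag_nodes :: "nat list \<Rightarrow> int \<Rightarrow> (nat \<times> nat) set" where
  "diag_nodes lam n = {(a, b). ext_node lam a b \<and> int a - int b = n}"

text \<open>diag_height lam n is the height of the top vertex of the highest square on the diagonal
  a - b = n, i.e. the value of omega at the integer n.\<close>

definition diag_height :: "nat list \<Rightarrow> int \<Rightarrow> int" where
  "diag_height lam n = Max ((\<lambda>(a, b). int a + int b) ` diag_nodes lam n)"

definition diag_slope :: "nat list \<Rightarrow> int \<Rightarrow> int" where
  "diag_slope lam n = diag_height lam (n + 1) - diag_height lam n"

definition diag_top :: "nat list \<Rightarrow> int \<Rightarrow> nat \<Rightarrow> nat \<Rightarrow> bool" where
  "diag_top lam n a b \<longleftrightarrow> ext_node lam a b \<and> int a - int b = n \<and> int a + int b = diag_height lam n"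

lemma finite_diag_nodes: "finite (diag_nodes lam n)"
proof -
  have "diag_nodes lam n \<subseteq> {..length lam + nat \<bar>n\<bar>} \<times> {..sum_list lam + nat \<bar>n\<bar>}"
  proof safe
    fix a b assume ab: "(a, b) \<in> diag_nodes lam n"
    have "a \<le> length lam + nat \<bar>n\<bar> \<and> b \<le> sum_list lam + nat \<bar>n\<bar>"
    proof (cases "a = 0 \<or> b = 0")
      case False
      then have "a \<le> length lam" "b \<le> lam ! (a - 1)"
        using ab by (auto simp: diag_nodes_def ext_node_def)
      moreover have "lam ! (a - 1) \<le> sum_list lam"
        using False \<open>a \<le> length lam\<close> by (intro member_le_sum_list nth_mem) auto
      ultimately show ?thesis by simp
    qed (use ab in \<open>auto simp: diag_nodes_def\<close>)
    then show "a \<le> length lam + nat \<bar>n\<bar>" "b \<le> sum_list lam + nat \<bar>n\<bar>" by simp_all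
  qed
  then show ?thesis by (rule finite_subset) auto
qed

lemma diag_height_ge: "ext_node lam a b \<Longrightarrow> int a + int b \<le> diag_height lam (int a - int b)"
  unfolding diag_height_def
  by (rule Max_ge) (simp add: finite_diag_nodes, force simp: diag_nodes_def)

lemma diag_top_exists: "\<exists>a b. diag_top lam n a b"
proof -
  have "(nat n, nat (- n)) \<in> diag_nodes lam n"
    by (auto simp: diag_nodes_def ext_node_def)
  then have "diag_height lam n \<in> (\<lambda>(a, b). int a + int b) ` diag_nodes lam n"
    unfolding diag_height_def by (intro Max_in) (auto simp: finite_diag_nodes)
  then show ?thesis by (force simp: diag_nodes_def diag_top_def)
qed

lemma ext_node_downward_closed:
  assumes "is_partition lam" "ext_node lam a b" "a' \<le> a" "b' \<le> b"
  shows "ext_node lam a' b'"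
proof (cases "a' = 0 \<or> b' = 0")
  case False
  then have a: "a \<le> length lam" "b \<le> lam ! (a - 1)" using assms by (auto simp: ext_node_def)
  have "lam ! (a - 1) \<le> lam ! (a' - 1)"
    using assms(1,3) False a(1) by (cases "a' = a") (auto simp: is_partition_def sorted_wrt_iff_nth_less)
  then show ?thesis using a assms(3,4) by (auto simp: ext_node_def)
qed (auto simp: ext_node_def)

lemma diag_top_step_up:
  assumes P: "is_partition lam" and top: "diag_top lam n a b" and up: "ext_node lam (a + 1) b"
  shows "diag_top lam (n + 1) (a + 1) b"
proof -
  have ge: "diag_height lam (n + 1) \<ge> int a + int b + 1"
    using diag_height_ge[OF up] top by (simp add: diag_top_def algebra_simps)
  obtain a' b' where top': "diag_top lam (n + 1) a' b'" using diag_top_exists by blast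
  have "diag_height lam (n + 1) = int a + int b + 1"
  proof (rule ccontr)
    assume "diag_height lam (n + 1) \<noteq> int a + int b + 1"
    then have "a + 1 \<le> a'" "b + 1 \<le> b'" using ge top top' by (auto simp: diag_top_def)
    then have "ext_node lam (a + 1) (b + 1)"
      using ext_node_downward_closed[OF P] top' by (auto simp: diag_top_def)
    from diag_height_ge[OF this] top show False by (simp add: diag_top_def)
  qed
  then show ?thesis using up top by (simp add: diag_top_def)
qed

lemma diag_top_step_down:
  assumes P: "is_partition lam" and top: "diag_top lam n a b" and up: "\<not> ext_node lam (a + 1) b"
  shows "1 \<le> b \<and> diag_top lam (n + 1) a (b - 1)"
proof
  show b: "1 \<le> b" using up by (cases b) (auto simp: ext_node_def)
  have down: "ext_node lam a (b - 1)"
    using ext_node_downward_closed[OF P] top by (auto simp: diag_top_def)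
  have ge: "diag_height lam (n + 1) \<ge> int a + int b - 1"
    using diag_height_ge[OF down] top b by (simp add: diag_top_def of_nat_diff algebra_simps)
  obtain a' b' where top': "diag_top lam (n + 1) a' b'" using diag_top_exists by blast
  have "diag_height lam (n + 1) = int a + int b - 1"
  proof (rule ccontr)
    assume "diag_height lam (n + 1) \<noteq> int a + int b - 1"
    then have "a + 1 \<le> a'" "b \<le> b'" using ge top top' by (auto simp: diag_top_def)
    then have "ext_node lam (a + 1) b"
      using ext_node_downward_closed[OF P] top' by (auto simp: diag_top_def)
    with up show False ..
  qed
  then show "diag_top lam (n + 1) a (b - 1)" using down top b by (auto simp: diag_top_def)
qed

lemma diag_slope_eq:
  assumes "is_partition lam" "diag_top lam n a b"
  shows "diag_slope lam n = (if ext_node lam (a + 1) b then 1 else -1)"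
  using diag_top_step_up[OF assms] diag_top_step_down[OF assms] assms(2)
  by (auto simp: diag_slope_def diag_top_def)

lemma diag_slope_cases:
  assumes "is_partition lam"
  shows "diag_slope lam n = 1 \<or> diag_slope lam n = -1"
  using diag_top_exists diag_slope_eq[OF assms] by metis

lemma diag_height_lipschitz:
  assumes "is_partition lam"
  shows "\<bar>diag_height lam m - diag_height lam n\<bar> \<le> \<bar>m - n\<bar>"
proof -
  have shift: "\<bar>diag_height lam (n + int d) - diag_height lam n\<bar> \<le> int d" for n d
  proof (induction d)
    case (Suc d)
    have "\<bar>diag_height lam (n + int d + 1) - diag_height lam (n + int d)\<bar> = 1"
      using diag_slope_cases[OF assms, of "n + int d"] by (auto simp: diag_slope_def)
    with Suc show ?case by (simp add: algebra_simps)
  qed simp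
  from shift[of n "nat (m - n)"] shift[of m "nat (n - m)"] show ?thesis
    by (cases "n \<le> m") (simp_all add: abs_minus_commute)
qed

text \<open>The left-hand side is the upper edge of the square of the node (p, q) over x = n + t.\<close>

lemma ext_node_tent_le:
  assumes P: "is_partition lam" and t: "0 \<le> t" "t \<le> 1" and node: "ext_node lam p q"
  shows "real p + real q - \<bar>of_int n + t - (real p - real q)\<bar>
         \<le> of_int (diag_height lam n) + of_int (diag_slope lam n) * t"
proof -
  define m where "m = int p - int q"
  have top: "int p + int q \<le> diag_height lam m"
    using diag_height_ge[OF node] by (simp add: m_def)
  have pq: "real p - real q = of_int m" by (simp add: m_def)
  have slope: "- t \<le> of_int (diag_slope lam n) * t"
    using diag_slope_cases[OF P, of n] t by auto
  consider "m \<le> n" | "n + 1 \<le> m" by linarith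
  then show ?thesis
  proof cases
    case 1
    then have "\<bar>of_int n + t - of_int m\<bar> = of_int n + t - of_int m" using t by linarith
    moreover have "int p + int q - (n - m) \<le> diag_height lam n" using 1 top diag_height_lipschitz[OF P, of m n] by linarith
    ultimately show ?thesis using slope unfolding pq by linarith
  next
    case 2
    then have "\<bar>of_int n + t - of_int m\<bar> = of_int m - of_int n - t" using t by linarith
    moreover have "int p + int q - (m - n - 1) \<le> diag_height lam n + diag_slope lam n"
      using 2 top diag_height_lipschitz[OF P, of m "n + 1"] unfolding diag_slope_def by linarith
    moreover have "of_int (diag_slope lam n) - 1 + t \<le> of_int (diag_slope lam n) * t"
      using diag_slope_cases[OF P, of n] t by auto
    ultimately show ?thesis unfolding pq by linarith
  qed
qed

lemma omega_on_unit_interval: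
  assumes P: "is_partition lam" and t: "0 \<le> t" "t \<le> 1"
  shows "omega lam (of_int n + t) = of_int (diag_height lam n) + of_int (diag_slope lam n) * t"
proof -
  define x where "x = of_int n + t"
  define z where "z = of_int (diag_height lam n) + of_int (diag_slope lam n) * t"
  let ?S = "{\<bar>x\<bar>} \<union> {y. \<exists>nd\<in>young lam. (x, y) \<in> node_square nd}"
  have tent: "real p + real q - \<bar>x - (real p - real q)\<bar> \<le> z" if "ext_node lam p q" for p q
    using ext_node_tent_le[OF P t that] unfolding x_def z_def .
  have bound: "y \<le> z" if "y \<in> ?S" for y
  proof (cases "y = \<bar>x\<bar>")
    case True
    show ?thesis
    proof (cases "x \<ge> 0")
      case True
      have "real (nat \<lceil>x\<rceil>) + real 0 - \<bar>x - (real (nat \<lceil>x\<rceil>) - real 0)\<bar> \<le> z"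
        by (rule tent) (simp add: ext_node_def)
      then show ?thesis using True \<open>y = \<bar>x\<bar>\<close> by (simp add: abs_of_nonpos)
    next
      case False
      have "real 0 + real (nat \<lceil>- x\<rceil>) - \<bar>x - (real 0 - real (nat \<lceil>- x\<rceil>))\<bar> \<le> z"
        by (rule tent) (simp add: ext_node_def)
      moreover have "0 \<le> x + of_int \<lceil>- x\<rceil>" using le_of_int_ceiling[of "- x"] by linarith
      ultimately show ?thesis using False \<open>y = \<bar>x\<bar>\<close> by simp
    qed
  next
    case False
    with that obtain a b where ab: "(a, b) \<in> young lam" "(x, y) \<in> node_square (a, b)" by auto
    then have "ext_node lam a b" by (simp add: young_def ext_node_def)
    from tent[OF this] ab(2) show ?thesis by (simp add: node_square_def)
  qed
  obtain a b where top: "diag_top lam n a b" using diag_top_exists by blast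
  then have n: "n = int a - int b" and h: "diag_height lam n = int a + int b"
    by (simp_all add: diag_top_def)
  have ab: "real a - real b = of_int n" "real a + real b = of_int (diag_height lam n)"
    by (simp add: n) (simp add: h)
  have attained: "z \<in> ?S"
  proof (cases "ext_node lam (a + 1) b")
    case up: True
    then have z: "z = of_int (diag_height lam n) + t" using diag_slope_eq[OF P top] by (simp add: z_def)
    show ?thesis
    proof (cases "b = 0")
      case True
      then have "x = z" "0 \<le> x" using ab z t by (simp_all add: x_def)
      then show ?thesis by simp
    next
      case False
      then have "(a + 1, b) \<in> young lam" using up by (simp add: young_def ext_node_def)
      moreover have "x - (real (a + 1) - real b) = t - 1" "z - (real (a + 1) + real b - 1) = t"
        using ab z by (simp_all add: x_def)
      then have "(x, z) \<in> node_square (a + 1, b)" using t by (simp add: node_square_def)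
      ultimately show ?thesis by blast
    qed
  next
    case False
    then have b: "1 \<le> b" and z: "z = of_int (diag_height lam n) - t"
      using diag_slope_eq[OF P top] diag_top_step_down[OF P top] by (simp_all add: z_def)
    show ?thesis
    proof (cases "a = 0")
      case True
      then have "- x = z" "x \<le> 0" using ab z t b by (simp_all add: x_def)
      then show ?thesis by simp
    next
      case False
      then have "(a, b) \<in> young lam" using top b by (simp add: diag_top_def young_def ext_node_def)
      moreover have "x - (real a - real b) = t" "z - (real a + real b - 1) = 1 - t"
        using ab z by (simp_all add: x_def)
      then have "(x, z) \<in> node_square (a, b)" using t by (simp add: node_square_def)
      ultimately show ?thesis by blast
    qed
  qed
  have "omega lam x = z" unfolding omega_def by (rule cSup_eq_maximum[OF attained bound])
  then show ?thesis by (simp add: x_def z_def)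
qed

lemma omega_has_derivative_diag_slope:
  assumes P: "is_partition lam" and y: "of_int n < y" "y < of_int n + 1"
  shows "(omega lam has_real_derivative of_int (diag_slope lam n)) (at y)"
proof -
  define g where "g u = of_int (diag_height lam n) + of_int (diag_slope lam n) * (u - of_int n)" for u :: real
  have "(g has_real_derivative of_int (diag_slope lam n)) (at y)"
    unfolding g_def by (auto intro!: derivative_eq_intros)
  then show ?thesis
  proof (rule has_field_derivative_transform_within_open)
    show "open {of_int n <..< of_int n + 1 :: real}" "y \<in> {of_int n <..< of_int n + 1}"
      using y by auto
    fix u :: real assume "u \<in> {of_int n <..< of_int n + 1}"
    then show "g u = omega lam u"
      using omega_on_unit_interval[OF P, of "u - of_int n" n] by (simp add: g_def)
  qed
qed

lemma omega_derivative_on_unit_interval_iff: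
  assumes P: "is_partition lam"
  shows "(\<forall>y\<in>{of_int n <..< of_int n + 1}. (omega lam has_real_derivative of_int d) (at y))
    \<longleftrightarrow> diag_slope lam n = d"
proof
  assume "\<forall>y\<in>{of_int n <..< of_int n + 1}. (omega lam has_real_derivative of_int d) (at y)"
  then have "(omega lam has_real_derivative of_int d) (at (of_int n + 1 / 2))" by simp
  from DERIV_unique[OF omega_has_derivative_diag_slope[OF P] this] show "diag_slope lam n = d"
    by simp
qed (use omega_has_derivative_diag_slope[OF P] in auto)

lemma outer_corner_iff:
  assumes "is_partition lam"
  shows "outer_corner (omega lam) x \<longleftrightarrow> diag_slope lam (x - 1) = 1 \<and> diag_slope lam x = -1"
  using omega_derivative_on_unit_interval_iff[OF assms, of "x - 1" 1]
    omega_derivative_on_unit_interval_iff[OF assms, of x "-1"]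
  by (simp add: outer_corner_def)

lemma inner_corner_iff:
  assumes "is_partition lam"
  shows "inner_corner (omega lam) x \<longleftrightarrow> diag_slope lam (x - 1) = -1 \<and> diag_slope lam x = 1"
  using omega_derivative_on_unit_interval_iff[OF assms, of "x - 1" "-1"]
    omega_derivative_on_unit_interval_iff[OF assms, of x 1]
  by (simp add: inner_corner_def)

lemma diag_slope_far_left:
  assumes P: "is_partition lam" and n: "n < - int (sum_list lam)"
  shows "diag_slope lam n = -1"
proof -
  obtain a b where top: "diag_top lam n a b" using diag_top_exists by blast
  have big: "int b > int (sum_list lam) + int a" using top n by (simp add: diag_top_def)
  have "\<not> ext_node lam (a + 1) b"
  proof
    assume "ext_node lam (a + 1) b"
    then have "a + 1 \<le> length lam" "b \<le> lam ! a" using big by (auto simp: ext_node_def)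
    moreover have "lam ! a \<le> sum_list lam"
      using \<open>a + 1 \<le> length lam\<close> by (intro member_le_sum_list nth_mem) auto
    ultimately show False using big by linarith
  qed
  with diag_slope_eq[OF P top] show ?thesis by simp
qed

section \<open>Corners\<close>

lemma le_card_le_iff_strict_mono_on:
  fixes f :: "nat \<Rightarrow> 'a::linorder"
  assumes mono: "strict_mono_on {1..N} f" and k: "k \<in> {1..N}"
  shows "k \<le> card {j\<in>{1..N}. f j \<le> x} \<longleftrightarrow> f k \<le> x"
proof
  assume "f k \<le> x"
  then have "{1..k} \<subseteq> {j\<in>{1..N}. f j \<le> x}"
    using k strict_mono_on_leD[OF mono] by fastforce
  from card_mono[OF _ this] show "k \<le> card {j\<in>{1..N}. f j \<le> x}" by simp
next
  assume card: "k \<le> card {j\<in>{1..N}. f j \<le> x}"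
  show "f k \<le> x"
  proof (rule ccontr)
    assume "\<not> f k \<le> x"
    then have "{j\<in>{1..N}. f j \<le> x} \<subseteq> {1..<k}"
      using k strict_mono_on_leD[OF mono, of k] by force
    from card_mono[OF _ this] card k show False by simp arith
  qed
qed

lemma card_le_succ_threshold:
  fixes f :: "'a \<Rightarrow> int"
  assumes "inj_on f A" "finite A"
  shows "card {j\<in>A. f j \<le> x + 1} = card {j\<in>A. f j \<le> x} + (if x + 1 \<in> f ` A then 1 else 0)"
proof -
  have split: "{j\<in>A. f j \<le> x + 1} = {j\<in>A. f j \<le> x} \<union> {j\<in>A. f j = x + 1}" by auto
  have "card {j\<in>A. f j = x + 1} = (if x + 1 \<in> f ` A then 1 else 0)"
  proof (cases "x + 1 \<in> f ` A")
    case True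
    then obtain j0 where "j0 \<in> A" "f j0 = x + 1" by auto
    with assms(1) have "{j\<in>A. f j = x + 1} = {j0}" by (auto simp: inj_on_def)
    with True show ?thesis by simp
  next
    case False
    then have empty: "{j\<in>A. f j = x + 1} = {}" by force
    show ?thesis unfolding empty using False by simp
  qed
  moreover have "card {j\<in>A. f j \<le> x + 1} = card {j\<in>A. f j \<le> x} + card {j\<in>A. f j = x + 1}"
    unfolding split by (rule card_Un_disjoint) (use assms(2) in auto)
  ultimately show ?thesis by simp
qed

context
  fixes lam :: "nat list" and r :: nat and c i :: "nat \<Rightarrow> int"
  assumes partition: "is_partition lam"
    and c_mono: "strict_mono_on {1..r} c"
    and c_outer: "c ` {1..r} = {x. outer_corner (omega lam) x}"
    and i_mono: "strict_mono_on {1..r+1} i"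
    and i_inner: "i ` {1..r+1} = {x. inner_corner (omega lam) x}"
begin

lemma outer_corners_eq: "x \<in> c ` {1..r} \<longleftrightarrow> diag_slope lam (x - 1) = 1 \<and> diag_slope lam x = -1"
  using c_outer outer_corner_iff[OF partition] by auto

lemma inner_corners_eq: "x \<in> i ` {1..r+1} \<longleftrightarrow> diag_slope lam (x - 1) = -1 \<and> diag_slope lam x = 1"
  using i_inner inner_corner_iff[OF partition] by auto

text \<open>The corners are exactly the sign changes of diag_slope, which is -1 far to the left.\<close>

lemma card_inner_corners_le:
  "card {j\<in>{1..r+1}. i j \<le> x} = card {j\<in>{1..r}. c j \<le> x} + (if diag_slope lam x = 1 then 1 else 0)"
proof -
  define x0 where "x0 = - int (sum_list lam) - 1"
  have far_left: "diag_slope lam y = -1" if "y \<le> x0" for y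
    using diag_slope_far_left[OF partition] that by (simp add: x0_def)
  have base: "card {j\<in>{1..r+1}. i j \<le> y} = card {j\<in>{1..r}. c j \<le> y} + (if diag_slope lam y = 1 then 1 else 0)"
    if "y \<le> x0" for y
  proof -
    have "\<not> i j \<le> y" if "j \<in> {1..r+1}" for j
      using inner_corners_eq[of "i j"] far_left[of "i j"] \<open>y \<le> x0\<close> that by auto
    moreover have "\<not> c j \<le> y" if "j \<in> {1..r}" for j
      using outer_corners_eq[of "c j"] far_left[of "c j - 1"] \<open>y \<le> x0\<close> that by auto
    ultimately have "{j\<in>{1..r+1}. i j \<le> y} = {}" and "{j\<in>{1..r}. c j \<le> y} = {}" by auto
    then show ?thesis using far_left[OF that] by (simp only: card.empty) simp
  qed
  show ?thesis
  proof (cases "x \<le> x0")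
    case False
    then have "x0 \<le> x" by simp
    then show ?thesis
    proof (induction x rule: int_ge_induct)
      case (step y)
      have "card {j\<in>{1..r+1}. i j \<le> y + 1}
          = card {j\<in>{1..r+1}. i j \<le> y} + (if y + 1 \<in> i ` {1..r+1} then 1 else 0)"
        by (rule card_le_succ_threshold) (use strict_mono_on_imp_inj_on[OF i_mono] in auto)
      moreover have "card {j\<in>{1..r}. c j \<le> y + 1}
          = card {j\<in>{1..r}. c j \<le> y} + (if y + 1 \<in> c ` {1..r} then 1 else 0)"
        by (rule card_le_succ_threshold) (use strict_mono_on_imp_inj_on[OF c_mono] in auto)
      ultimately show ?case
        using step.IH inner_corners_eq[of "y + 1"] outer_corners_eq[of "y + 1"]
          diag_slope_cases[OF partition, of y] diag_slope_cases[OF partition, of "y + 1"] by auto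
    qed (rule base, simp)
  qed (rule base)
qed

lemma ascent_between_corners:
  assumes k: "k \<in> {1..r}"
  shows "i k < c k" and "\<And>m. i k \<le> m \<Longrightarrow> m < c k \<Longrightarrow> diag_slope lam m = 1"
proof -
  have k': "k \<in> {1..r+1}" using k by simp
  have outer_count: "k \<le> card {j\<in>{1..r}. c j \<le> x} \<longleftrightarrow> c k \<le> x" for x
    by (rule le_card_le_iff_strict_mono_on[OF c_mono k])
  have inner_count: "k \<le> card {j\<in>{1..r+1}. i j \<le> x} \<longleftrightarrow> i k \<le> x" for x
    by (rule le_card_le_iff_strict_mono_on[OF i_mono k'])
  show "diag_slope lam m = 1" if "i k \<le> m" "m < c k" for m
    using card_inner_corners_le[of m] inner_count[of m] outer_count[of m] that
    by (auto split: if_splits)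
  have "i k \<le> c k"
    using card_inner_corners_le[of "c k"] inner_count[of "c k"] outer_count[of "c k"] by simp
  moreover have "i k \<noteq> c k"
    using outer_corners_eq[of "c k"] inner_corners_eq[of "i k"] k by auto
  ultimately show "i k < c k" by simp
qed

lemma outer_corner_before_inner_corner:
  assumes k: "k \<in> {1..<r}"
  shows "c k < i (Suc k)"
proof -
  have "diag_slope lam (c k) = -1" using outer_corners_eq[of "c k"] k by auto
  moreover have "c k < c (Suc k)" using k by (intro strict_mono_onD[OF c_mono]) auto
  ultimately have "\<not> Suc k \<le> card {j\<in>{1..r+1}. i j \<le> c k}"
    using card_inner_corners_le[of "c k"] le_card_le_iff_strict_mono_on[OF c_mono, of "Suc k" "c k"] k
    by simp
  then show ?thesis
    using le_card_le_iff_strict_mono_on[OF i_mono, of "Suc k" "c k"] k by simp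
qed

end

lemma diag_top_along_ascent:
  assumes P: "is_partition lam" and top: "diag_top lam n a b"
    and ascent: "\<And>m. n \<le> m \<Longrightarrow> m < n + int d \<Longrightarrow> diag_slope lam m = 1"
  shows "diag_top lam (n + int d) (a + d) b"
  using ascent
proof (induction d)
  case (Suc d)
  then have top_d: "diag_top lam (n + int d) (a + d) b" by simp
  have "diag_slope lam (n + int d) = 1" using Suc.prems by simp
  then have "ext_node lam (a + d + 1) b" using diag_slope_eq[OF P top_d] by (simp split: if_splits)
  from diag_top_step_up[OF P top_d this] show ?case by (simp add: algebra_simps)
qed (use top in simp)

text \<open>Along an ascent of length e the top nodes move straight down the column b, through the
  rows a + 1, ..., a + e, and the outer corner at its end forces all these rows to have length b.\<close>

lemma e_regular_ascent_to_outer_corner_lt: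
  assumes P: "is_partition lam" and R: "e_regular e lam" and e: "1 \<le> e"
    and ascent: "\<And>m. n \<le> m \<Longrightarrow> m < x \<Longrightarrow> diag_slope lam m = 1"
    and corner: "diag_slope lam x = -1"
  shows "x - n < int e"
proof (rule ccontr)
  assume "\<not> x - n < int e"
  then have long: "diag_slope lam m = 1" if "x - int e \<le> m" "m < x" for m
    using ascent that by simp
  obtain a b where top: "diag_top lam (x - int e) a b" using diag_top_exists by blast
  have top_j: "diag_top lam (x - int e + int j) (a + j) b" if "j \<le> e" for j
    using diag_top_along_ascent[OF P top] long that by simp
  have "\<not> ext_node lam (a + e + 1) b"
    using diag_slope_eq[OF P top_j[of e]] corner by (simp split: if_splits)
  then have b: "1 \<le> b" using diag_top_step_down[OF P top_j[of e]] by simp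
  have row: "a + j \<le> length lam \<and> lam ! (a + j - 1) = b" if j: "1 \<le> j" "j \<le> e" for j
  proof -
    have "ext_node lam (a + j) b" using top_j[OF j(2)] by (simp add: diag_top_def)
    with b j have len: "a + j \<le> length lam" "b \<le> lam ! (a + j - 1)" by (auto simp: ext_node_def)
    have "\<not> ext_node lam (a + j) (b + 1)"
    proof
      assume "ext_node lam (a + j) (b + 1)"
      have diag: "int (a + j) - int (b + 1) = x - int e + int (j - 1)"
        and prev: "int (a + (j - 1)) + int b = diag_height lam (x - int e + int (j - 1))"
        using top_j[of "j - 1"] j by (auto simp: diag_top_def)
      from diag_height_ge[OF \<open>ext_node lam (a + j) (b + 1)\<close>] prev j show False
        unfolding diag by simp
    qed
    with len j have "lam ! (a + j - 1) \<le> b" by (auto simp: ext_node_def)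
    with len show ?thesis by simp
  qed
  from R have "1 \<le> a + 1 \<and> a + 1 + e - 1 \<le> length lam \<longrightarrow> lam ! (a + 1 - 1) > lam ! (a + 1 + e - 2)"
    unfolding e_regular_def by blast
  with row[of 1] row[of e] e show False by simp
qed

section \<open>Flattening at an outer corner\<close>

lemma omega_v_shape:
  assumes P: "is_partition lam" and descent: "diag_slope lam (m - 1) = -1"
    and ascent: "\<And>j. m \<le> j \<Longrightarrow> j < n \<Longrightarrow> diag_slope lam j = 1"
    and s: "of_int m - 1 \<le> s" "s \<le> of_int n"
  shows "omega lam s = of_int (diag_height lam m) + \<bar>s - of_int m\<bar>"
proof (cases "s \<le> of_int m")
  case True
  have "omega lam (of_int (m - 1) + (s - of_int (m - 1)))
      = of_int (diag_height lam (m - 1)) + of_int (diag_slope lam (m - 1)) * (s - of_int (m - 1))"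
    using s True by (intro omega_on_unit_interval[OF P]) auto
  moreover have "diag_height lam m = diag_height lam (m - 1) - 1"
    using descent by (simp add: diag_slope_def)
  ultimately show ?thesis using True descent by simp
next
  case False
  define j where "j = \<lceil>s\<rceil> - 1"
  have j: "m \<le> j" "j < n" "0 \<le> s - of_int j" "s - of_int j \<le> 1"
    using False s unfolding j_def by (auto simp: le_ceiling_iff ceiling_le_iff) linarith+
  have "diag_height lam (m + int d) = diag_height lam m + int d" if "m + int d \<le> n" for d
    using that
  proof (induction d)
    case (Suc d)
    then have "diag_slope lam (m + int d) = 1" by (intro ascent) auto
    with Suc show ?case by (simp add: diag_slope_def algebra_simps)
  qed simp
  from this[of "nat (j - m)"] j have height: "diag_height lam j = diag_height lam m + (j - m)" by simp
  have "omega lam (of_int j + (s - of_int j))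
      = of_int (diag_height lam j) + of_int (diag_slope lam j) * (s - of_int j)"
    using j by (intro omega_on_unit_interval[OF P]) auto
  with height ascent[OF j(1,2)] False show ?thesis by simp
qed

lemma flattening_v_shape:
  fixes f g :: "real \<Rightarrow> real" and ik ck Y h :: real and e :: nat
  assumes e: "2 \<le> e" and run: "ik + 1 \<le> ck" "ck \<le> ik + real e - 1"
    and shape: "\<And>s. ik - 1 \<le> s \<Longrightarrow> s \<le> ck \<Longrightarrow> f s = Y + \<bar>s - ik\<bar>"
    and h: "h = (GREATEST s. s < ck \<and> f s = f ck + alpha e * (s - ck))"
    and g: "\<And>s. g s = (if h \<le> s \<and> s \<le> ck then f ck + alpha e * (s - ck) else f s)"
  shows "h \<in> {ik - 1..<ik}"
    and "\<And>s. s \<notin> {ik - 1<..<ck} \<Longrightarrow> g s = f s"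
    and "\<And>s. s \<in> {ik - 1<..<ck} \<Longrightarrow> 0 \<le> g s - f s \<and> g s - f s \<le> real e"
proof -
  define u where "u = 2 / real e"
  define q where "q = (ck - ik) / (real e - 1)"
  define G where "G s = f ck + alpha e * (s - ck) - f s" for s
  \<comment> \<open>The gap G is linear on both arms of the V; it vanishes at ck and at ik - q.\<close>
  have u: "0 < u" "u \<le> 1" "u * real e = 2" using e by (auto simp: u_def field_simps)
  have q: "0 < q" "q \<le> 1" using e run by (auto simp: q_def field_simps)
  have uq: "(2 - u) * q = u * (ck - ik)" using e by (simp add: u_def q_def field_simps)
  have max_gap: "u * (ck - ik) \<le> real e"
  proof -
    have "u * (ck - ik) \<le> u * real e" using u run by (intro mult_left_mono) auto
    then show ?thesis using u e by simp
  qed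
  have fck: "f ck = Y + (ck - ik)" using shape[of ck] run by simp
  have G_left: "G s = (2 - u) * (s - (ik - q))" if "ik - 1 \<le> s" "s \<le> ik" for s
    using shape[of s] that run fck uq by (simp add: G_def alpha_def u_def[symmetric] algebra_simps)
  have G_right: "G s = u * (ck - s)" if "ik \<le> s" "s \<le> ck" for s
    using shape[of s] that run fck by (simp add: G_def alpha_def u_def[symmetric] algebra_simps)
  have G_pos: "0 < G s" if "ik - q < s" "s < ck" for s
    using G_left[of s] G_right[of s] that q u by (cases "s \<le> ik") auto
  have G_bounds: "0 \<le> G s \<and> G s \<le> real e" if "ik - q \<le> s" "s \<le> ck" for s
  proof (cases "s \<le> ik")
    case True
    have "(2 - u) * (s - (ik - q)) \<le> (2 - u) * q" using u True by (intro mult_left_mono) auto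
    then show ?thesis using G_left[of s] True that q u uq max_gap by simp
  next
    case False
    have "u * (ck - s) \<le> u * (ck - ik)" using u False by (intro mult_left_mono) auto
    moreover have "0 \<le> u * (ck - s)" using u that by simp
    ultimately show ?thesis using G_right[of s] False that max_gap by simp
  qed
  have h_eq: "h = ik - q"
    unfolding h
  proof (rule Greatest_equality)
    show "ik - q < ck \<and> f (ik - q) = f ck + alpha e * (ik - q - ck)"
      using G_left[of "ik - q"] q run by (simp add: G_def)
    fix y assume "y < ck \<and> f y = f ck + alpha e * (y - ck)"
    then show "y \<le> ik - q" using G_pos[of y] by (force simp: G_def)
  qed
  show "h \<in> {ik - 1..<ik}" using h_eq q by simp
  show "g s = f s" if "s \<notin> {ik - 1<..<ck}" for s
  proof (cases "h \<le> s \<and> s \<le> ck")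
    case True
    with that h_eq q have "s = ik - q \<or> s = ck" by auto
    then have "G s = 0" using G_left[of s] G_right[of s] q run by auto
    with True show ?thesis by (simp add: g G_def)
  qed (auto simp: g)
  show "0 \<le> g s - f s \<and> g s - f s \<le> real e" if "s \<in> {ik - 1<..<ck}" for s
    using G_bounds[of s] e h_eq by (simp add: g G_def)
qed

lemma oflat_Suc_eq:
  "oflat a c w (Suc k) s =
    (if hpt a c w (Suc k) \<le> s \<and> s \<le> of_int (c (Suc k))
     then w (of_int (c (Suc k))) + a * (s - of_int (c (Suc k))) else oflat a c w k s)"
  by (simp add: hpt_def Let_def)

lemma oflat_eq_base_right_of_corner:
  assumes mono: "strict_mono_on {1..r} c" and "k \<le> r" and "k = 0 \<or> of_int (c k) \<le> s"
  shows "oflat a c w k s = w s"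
  using assms(2,3)
proof (induction k)
  case (Suc k)
  have "k = 0 \<or> of_int (c k) \<le> s"
  proof (cases "k = 0")
    case False
    then have "c k < c (Suc k)" using Suc.prems(1) by (intro strict_mono_onD[OF mono]) auto
    then show ?thesis using Suc.prems(2) by simp
  qed simp
  then show ?case using Suc by (auto simp del: oflat.simps(2) simp: oflat_Suc_eq)
qed simp

theorem proposition5p3:
  fixes e :: nat and lam :: "nat list" and r :: nat
    and c :: "nat \<Rightarrow> int" and i :: "nat \<Rightarrow> int" and k :: nat
  assumes "e \<ge> 2"
    and "is_partition lam"
    and "e_regular e lam"
    and "strict_mono_on {1..r} c"
    and "c ` {1..r} = {x. outer_corner (omega lam) x}"
    and "strict_mono_on {1..r+1} i"
    and "i ` {1..r+1} = {x. inner_corner (omega lam) x}"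
    and "k \<in> {1..r}"
  shows "hpt (alpha e) c (omega lam) k \<in> {real_of_int (i k) - 1 ..< real_of_int (i k)}
    \<and> (\<forall>s. s \<notin> {real_of_int (i k) - 1 <..< real_of_int (c k)} \<longrightarrow>
          oflat (alpha e) c (omega lam) k s = oflat (alpha e) c (omega lam) (k - 1) s)
    \<and> (\<forall>s\<in>{real_of_int (i k) - 1 <..< real_of_int (c k)}.
          0 \<le> oflat (alpha e) c (omega lam) k s - oflat (alpha e) c (omega lam) (k - 1) s
        \<and> oflat (alpha e) c (omega lam) k s - oflat (alpha e) c (omega lam) (k - 1) s \<le> real e)"
proof -
  note corners = assms(2,4-7) and P = assms(2) and k = assms(8)
  obtain k' where k': "k = Suc k'" using k by (cases k) auto
  let ?f = "oflat (alpha e) c (omega lam) k'"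
  have ascent: "i k < c k" "\<And>m. i k \<le> m \<Longrightarrow> m < c k \<Longrightarrow> diag_slope lam m = 1"
    using ascent_between_corners[OF corners k] by auto
  have descent: "diag_slope lam (i k - 1) = -1" and corner: "diag_slope lam (c k) = -1"
    using inner_corners_eq[OF corners, of "i k"] outer_corners_eq[OF corners, of "c k"] k by auto
  have short: "c k - i k < int e"
    using e_regular_ascent_to_outer_corner_lt[OF P assms(3) _ ascent(2) corner] assms(1) by simp
  have agree: "?f s = omega lam s" if "of_int (i k) - 1 \<le> s" for s
  proof (rule oflat_eq_base_right_of_corner[OF assms(4)])
    have "k' = 0 \<or> c k' < i k"
      using outer_corner_before_inner_corner[OF corners, of k'] k k' by (cases "k' = 0") auto
    then show "k' = 0 \<or> of_int (c k') \<le> s" using that by linarith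
  qed (use k k' in simp)
  have shape: "?f s = of_int (diag_height lam (i k)) + \<bar>s - of_int (i k)\<bar>"
    if "of_int (i k) - 1 \<le> s" "s \<le> of_int (c k)" for s
    using agree[OF that(1)] omega_v_shape[OF P descent ascent(2) that] by simp
  have w_ck: "omega lam (of_int (c k)) = ?f (of_int (c k))" using agree ascent by simp
  have hpt: "hpt (alpha e) c (omega lam) k
      = (GREATEST s. s < of_int (c k) \<and> ?f s = ?f (of_int (c k)) + alpha e * (s - of_int (c k)))"
    unfolding hpt_def Let_def w_ck by (simp add: k')
  have step: "oflat (alpha e) c (omega lam) k s
      = (if hpt (alpha e) c (omega lam) k \<le> s \<and> s \<le> of_int (c k)
         then ?f (of_int (c k)) + alpha e * (s - of_int (c k)) else ?f s)" for s
    using oflat_Suc_eq[of "alpha e" c "omega lam" k' s] unfolding k'[symmetric] w_ck .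
  have "k - 1 = k'" using k' by simp
  with flattening_v_shape[OF assms(1) _ _ shape hpt step] ascent(1) short show ?thesis
    by auto
qed

end
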